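(* Let $k$ be a field, let $n,m\ge0$ be integers, $d_1,\ldots,d_m$ positive integers, and $h_\bullet=|n;d_1,\ldots,d_m|$ the associated Fröberg sequence. Let $l=n$ if $n\ge1$ and $l=1$ if $n=0$. Then there is an almost reverse lexicographic ideal $K$ in $R=k[x_1,\ldots,x_l]$ with $H(R/K,d)=h_d$ for all $d\ge0$.
   Context: For $P=\sum p_iz^i\in\mathbb{Z}[[z]]$ let $t=\min\{d:p_d\le0\}$ and $|P|=\sum q_iz^i$ with $q_i=p_i$ for $i<t$, $q_i=0$ for $i\ge t$. The Fröberg sequence $|n;d_1,\ldots,d_m|$ (written $|n;\emptyset|$ if $m=0$) is the sequence $(h_0,h_1,\ldots)$ with $\sum h_iz^i=\left|\prod_{j=1}^m(1-z^{d_j})/(1-z)^n\right|$. $H(R/K,d)=\dim_k(R/K)_d$. Degree reverse lexicographic order: for $M=x^\alpha,N=x^\beta$, $M>N$ iff $\deg M>\deg N$, or degrees equal and for the largest $s$ with $\alpha_s\neq\beta_s$ one has $\alpha_s<\beta_s$. A monomial ideal $K$ is almost reverse lexicographic if for every monomial $M$ and every minimal monomial generator $N$ of $K$ with $\deg M=\deg N$ and $M>N$, $M\in K$ (the zero ideal counts). *)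

theory Defs
  imports "HOL-Computational_Algebra.Formal_Power_Series"
begin

(* Generating series  prod_j (1 - z^{d_j}) / (1 - z)^n, computed over the rationals
   (its coefficients are integers). *)
definition froberg_series :: "nat \<Rightarrow> nat list \<Rightarrow> rat fps" where
  "froberg_series n ds =
     (\<Prod>j<length ds. (1 - fps_X ^ (ds ! j))) * inverse ((1 - fps_X) ^ n)"

definition trunc_pos :: "rat fps \<Rightarrow> nat \<Rightarrow> rat" where
  "trunc_pos P i = (if \<forall>j\<le>i. fps_nth P j > 0 then fps_nth P i else 0)"

definition froberg :: "nat \<Rightarrow> nat list \<Rightarrow> nat \<Rightarrow> rat" where
  "froberg n ds = trunc_pos (froberg_series n ds)"

(* Monomials of R = k[x_1,...,x_l]: exponent vectors; variable x_{i+1} has index i. *)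
definition monomials :: "nat \<Rightarrow> (nat \<Rightarrow> nat) set" where
  "monomials l = {a. \<forall>i\<ge>l. a i = 0}"

definition mdeg :: "nat \<Rightarrow> (nat \<Rightarrow> nat) \<Rightarrow> nat" where
  "mdeg l a = (\<Sum>i<l. a i)"

definition mdvd :: "(nat \<Rightarrow> nat) \<Rightarrow> (nat \<Rightarrow> nat) \<Rightarrow> bool" where
  "mdvd a b \<longleftrightarrow> (\<forall>i. a i \<le> b i)"

(* A monomial ideal of R, represented by its set of monomials:
   a set of monomials closed under multiplication by monomials. *)
definition monomial_ideal :: "nat \<Rightarrow> (nat \<Rightarrow> nat) set \<Rightarrow> bool" where
  "monomial_ideal l K \<longleftrightarrow> K \<subseteq> monomials l \<and>
     (\<forall>a\<in>K. \<forall>b\<in>monomials l. mdvd a b \<longrightarrow> b \<in> K)"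

definition min_gens :: "nat \<Rightarrow> (nat \<Rightarrow> nat) set \<Rightarrow> (nat \<Rightarrow> nat) set" where
  "min_gens l K = {a\<in>K. \<forall>b\<in>K. mdvd b a \<longrightarrow> b = a}"

(* degree reverse lexicographic order: revlex_gt l a b  means  x^a > x^b *)
definition revlex_gt :: "nat \<Rightarrow> (nat \<Rightarrow> nat) \<Rightarrow> (nat \<Rightarrow> nat) \<Rightarrow> bool" where
  "revlex_gt l a b \<longleftrightarrow> mdeg l a > mdeg l b \<or>
     (mdeg l a = mdeg l b \<and> (\<exists>s<l. a s \<noteq> b s \<and> (\<forall>t. s < t \<and> t < l \<longrightarrow> a t = b t) \<and> a s < b s))"

definition almost_revlex :: "nat \<Rightarrow> (nat \<Rightarrow> nat) set \<Rightarrow> bool" where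
  "almost_revlex l K \<longleftrightarrow>
     (\<forall>M\<in>monomials l. \<forall>N\<in>min_gens l K. mdeg l M = mdeg l N \<and> revlex_gt l M N \<longrightarrow> M \<in> K)"

(* Hilbert function of R/K for a monomial ideal K: dim_k (R/K)_d equals the number
   of degree-d monomials not in K (standard monomials form a k-basis). *)
definition hilb_quot :: "nat \<Rightarrow> (nat \<Rightarrow> nat) set \<Rightarrow> nat \<Rightarrow> nat" where
  "hilb_quot l K d = card {a\<in>monomials l. mdeg l a = d \<and> a \<notin> K}"

end

(* Writing h(z) for the generating function of a sequence h, the truncation |.| commutes with
   multiplication by 1 - z^e in the sense that |(|P|)(1 - z^e)| = |P (1 - z^e)|. Hence the
   Froberg sequence arises from the coefficients of 1/(1 - z)^n by steps h |-> |h(z)(1 - z^e)|,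
   and these steps preserve the class of "admissible" sequences in n variables: sequences that
   start with 1, take natural values, increase strictly up to a peak and then weakly decrease,
   and whose truncated increments |(1 - z) h(z)| are admissible in n - 1 variables.

   Admissible sequences are realised by induction on the number of variables. Given an almost
   revlex ideal K0 in x_1, ..., x_k realising the truncated increments of h, the standard
   monomials in k + 1 variables up to the peak degree form the cone over those of K0, whose
   count in degree d telescopes to h(d). Beyond the peak, degree d gets x_(k+1)^(d - peak) times
   the h(d) revlex-smallest monomials of the peak degree, which is possible since h does not
   increase there. Both parts are closed under taking divisors and leave only revlex-small
   standard monomials next to each minimal generator. *)

theory Submission
  imports Defs "HOL-Library.FuncSet"
begin

section \<open>Truncated products with 1 - z^e\<close>

definition shift_diff :: "nat \<Rightarrow> (nat \<Rightarrow> rat) \<Rightarrow> nat \<Rightarrow> rat" where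
  "shift_diff e h d = h d - (if d < e then 0 else h (d - e))"

definition froberg_step :: "nat \<Rightarrow> (nat \<Rightarrow> rat) \<Rightarrow> nat \<Rightarrow> rat" where
  "froberg_step e h = trunc_pos (Abs_fps h * (1 - fps_X ^ e))"

lemma fps_nth_mult_one_minus_X_power:
  fixes F :: "rat fps"
  shows "fps_nth (F * (1 - fps_X ^ e)) d = fps_nth F d - (if d < e then 0 else fps_nth F (d - e))"
proof -
  have "F * (1 - fps_X ^ e) = F - fps_X ^ e * F" by (simp add: algebra_simps)
  then show ?thesis by (simp add: fps_X_power_mult_nth)
qed

lemma fps_nth_Abs_fps_mult_one_minus_X_power:
  "fps_nth (Abs_fps h * (1 - fps_X ^ e)) = shift_diff e h"
  by (rule ext) (simp add: fps_nth_mult_one_minus_X_power shift_diff_def)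

lemma sum_shift_diff_one: "(\<Sum>i\<le>d. shift_diff 1 h i) = h d"
  by (induction d) (auto simp: shift_diff_def)

lemma trunc_pos_nonneg: "trunc_pos P d \<ge> 0"
  unfolding trunc_pos_def by (auto intro: less_imp_le)

lemma froberg_step_eq:
  "froberg_step e h d = (if \<forall>j\<le>d. shift_diff e h j > 0 then shift_diff e h d else 0)"
  unfolding froberg_step_def trunc_pos_def fps_nth_Abs_fps_mult_one_minus_X_power ..

lemma froberg_step_nonneg: "froberg_step e h d \<ge> 0"
  unfolding froberg_step_def by (rule trunc_pos_nonneg)

text \<open>Up to the first non-positive coefficient t of P both sides agree; at t the truncated
  side subtracts the coefficient of P at t - e or nothing, so it is non-positive as well.\<close>

lemma froberg_step_trunc_pos:
  fixes P :: "rat fps"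
  assumes "e \<ge> 1"
  shows "froberg_step e (trunc_pos P) = trunc_pos (P * (1 - fps_X ^ e))"
proof
  fix d
  let ?A = "P * (1 - fps_X ^ e)" and ?B = "Abs_fps (trunc_pos P) * (1 - fps_X ^ e)"
  show "froberg_step e (trunc_pos P) d = trunc_pos ?A d"
    unfolding froberg_step_def
  proof (cases "\<forall>j\<le>d. fps_nth P j > 0")
    case True
    then have "\<And>j. j \<le> d \<Longrightarrow> fps_nth ?B j = fps_nth ?A j"
      by (simp add: fps_nth_mult_one_minus_X_power trunc_pos_def)
    then show "trunc_pos ?B d = trunc_pos ?A d" unfolding trunc_pos_def by auto
  next
    case False
    define t where "t = (LEAST j. \<not> fps_nth P j > 0)"
    have t: "t \<le> d" "\<not> fps_nth P t > 0"
      using False Least_le[of "\<lambda>j. \<not> fps_nth P j > 0"] LeastI[of "\<lambda>j. \<not> fps_nth P j > 0"]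
      unfolding t_def by (auto intro: order_trans)
    have below: "\<And>j. j < t \<Longrightarrow> fps_nth P j > 0"
      using not_less_Least unfolding t_def by blast
    have "trunc_pos P t = 0" "\<And>j. j < t \<Longrightarrow> trunc_pos P j = fps_nth P j"
      using t below unfolding trunc_pos_def by auto
    then have "\<not> fps_nth ?A t > 0" "\<not> fps_nth ?B t > 0"
      using t below[of "t - e"] assms by (auto simp: fps_nth_mult_one_minus_X_power)
    then show "trunc_pos ?B d = trunc_pos ?A d"
      using t(1) unfolding trunc_pos_def by auto
  qed
qed

lemma froberg_step_commute:
  assumes "e \<ge> 1"
  shows "froberg_step 1 (froberg_step e h) = froberg_step e (froberg_step 1 h)"
proof -
  have "froberg_step 1 (froberg_step e h) = trunc_pos (Abs_fps h * (1 - fps_X ^ e) * (1 - fps_X ^ 1))"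
    unfolding froberg_step_def[of e] by (rule froberg_step_trunc_pos) simp
  also have "Abs_fps h * (1 - fps_X ^ e) * (1 - fps_X ^ 1) = Abs_fps h * (1 - fps_X ^ 1) * (1 - fps_X ^ e)"
    by (simp add: algebra_simps)
  also have "trunc_pos \<dots> = froberg_step e (froberg_step 1 h)"
    unfolding froberg_step_def[of 1] by (rule froberg_step_trunc_pos[OF assms, symmetric])
  finally show ?thesis .
qed

lemma froberg_step_Nats:
  assumes "\<And>d. h d \<in> \<nat>"
  shows "froberg_step e h d \<in> \<nat>"
proof (cases "\<forall>j\<le>d. shift_diff e h j > 0")
  case True
  obtain x y where "h d = of_nat x" "(if d < e then 0 else h (d - e)) = of_nat y"
    using assms by (metis Nats_cases of_nat_0)
  moreover have "shift_diff e h d > 0" using True by simp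
  ultimately show ?thesis
    unfolding froberg_step_eq shift_diff_def using True
    by (simp add: of_nat_diff[symmetric] del: of_nat_diff)
qed (auto simp: froberg_step_eq)

lemma shift_diff_commute:
  assumes "e \<ge> 1"
  shows "shift_diff 1 (shift_diff e h) = shift_diff e (shift_diff 1 h)"
proof
  fix d show "shift_diff 1 (shift_diff e h) d = shift_diff e (shift_diff 1 h) d"
    using assms unfolding shift_diff_def by (cases "d < e"; cases "d = e") auto
qed

section \<open>Unimodal and admissible sequences\<close>

definition unimodal :: "(nat \<Rightarrow> rat) \<Rightarrow> bool" where
  "unimodal g \<longleftrightarrow> (\<forall>d1 d2. 0 < d1 \<and> d1 \<le> d2 \<and> g d1 \<le> g (d1 - 1) \<longrightarrow> g d2 \<le> g (d2 - 1))"

lemma unimodal_antimono: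
  assumes "unimodal g" "0 < p" "g p \<le> g (p - 1)" "p - 1 \<le> b" "b \<le> a"
  shows "g a \<le> g b"
  using assms(5)
proof (induction a rule: dec_induct)
  case (step a)
  have "p \<le> Suc a" using assms(2,4) step.hyps by simp
  then have "g (Suc a) \<le> g a"
    using assms(1-3) unfolding unimodal_def by (metis diff_Suc_1)
  then show ?case using step.IH by simp
qed simp

lemma strict_mono_upto:
  fixes g :: "nat \<Rightarrow> rat"
  assumes "\<And>j. 0 < j \<Longrightarrow> j \<le> m \<Longrightarrow> g (j - 1) < g j" "a < b" "b \<le> m"
  shows "g a < g b"
  using assms(2,3)
proof (induction b)
  case (Suc b)
  then show ?case using assms(1)[of "Suc b"] by (cases "a = b") auto
qed simp

lemma unimodal_cases:
  assumes "unimodal g"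
  obtains "\<And>a b. a < b \<Longrightarrow> g a < g b"
  | p where "\<And>a b. a < b \<Longrightarrow> b \<le> p \<Longrightarrow> g a < g b" "\<And>a b. p \<le> b \<Longrightarrow> b \<le> a \<Longrightarrow> g a \<le> g b"
proof (cases "\<forall>j>0. g (j - 1) < g j")
  case True
  then show ?thesis using strict_mono_upto that(1) by blast
next
  case False
  define q where "q = (LEAST j. 0 < j \<and> \<not> g (j - 1) < g j)"
  have q: "0 < q" "g q \<le> g (q - 1)"
    using False LeastI_ex[of "\<lambda>j. 0 < j \<and> \<not> g (j - 1) < g j"] unfolding q_def by auto
  have "g (j - 1) < g j" if "0 < j" "j \<le> q - 1" for j
  proof -
    have "j < q" using that q(1) by simp
    then show ?thesis
      using not_less_Least[of j "\<lambda>j. 0 < j \<and> \<not> g (j - 1) < g j"] that(1) unfolding q_def by blast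
  qed
  then have "\<And>a b. a < b \<Longrightarrow> b \<le> q - 1 \<Longrightarrow> g a < g b"
    using strict_mono_upto[of "q - 1" g] by blast
  moreover have "\<And>a b. q - 1 \<le> b \<Longrightarrow> b \<le> a \<Longrightarrow> g a \<le> g b"
    using unimodal_antimono[OF assms q] .
  ultimately show ?thesis by (rule that(2))
qed

text \<open>If g(d) \<le> g(d - e) at some d > 0, then d lies beyond the peak of g, and so does every
  later degree d', where either d' - e is beyond the peak too or g(d' - e) \<ge> g(d - e).\<close>

lemma unimodal_shift_diff_nonpos:
  assumes g: "unimodal g" "\<And>d. g d \<ge> 0" and e: "1 \<le> e"
    and d: "0 < d1" "d1 \<le> d2" and nonpos: "shift_diff e g d1 \<le> 0"
  shows "shift_diff e g d2 \<le> 0"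
proof -
  have rising: False if "\<And>a. a < d1 \<Longrightarrow> g a < g d1"
    using nonpos that[of 0] that[of "d1 - e"] g(2)[of 0] d e
    by (cases "d1 < e") (auto simp: shift_diff_def)
  from g(1) show ?thesis
  proof (cases rule: unimodal_cases)
    case 1
    then show ?thesis using rising by blast
  next
    case (2 p)
    have "p < d1" using rising 2(1) by (meson le_less_linear)
    then have "g d2 \<le> g d1" using 2(2) d by simp
    moreover have "g d1 \<le> (if d1 < e then 0 else g (d1 - e))"
      using nonpos by (simp add: shift_diff_def)
    moreover have "g (d1 - e) \<le> g (d2 - e)" if "d2 - e < p" "\<not> d1 < e"
      using that 2(1)[of "d1 - e" "d2 - e"] diff_le_mono[OF d(2), of e] by (cases "d1 - e = d2 - e") auto
    ultimately show ?thesis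
      using 2(2)[of "d2 - e" d2] g(2)[of "d2 - e"] d
      unfolding shift_diff_def by (cases "d2 - e < p") (auto split: if_splits)
  qed
qed

lemma unimodal_froberg_stepI:
  assumes "\<And>d1 d2. 0 < d1 \<Longrightarrow> d1 \<le> d2 \<Longrightarrow> \<forall>j\<le>d2. shift_diff e h j > 0 \<Longrightarrow>
             shift_diff e h d1 \<le> shift_diff e h (d1 - 1) \<Longrightarrow> shift_diff e h d2 \<le> shift_diff e h (d2 - 1)"
  shows "unimodal (froberg_step e h)"
  unfolding unimodal_def
proof (intro allI impI)
  fix d1 d2 assume d: "0 < d1 \<and> d1 \<le> d2 \<and> froberg_step e h d1 \<le> froberg_step e h (d1 - 1)"
  show "froberg_step e h d2 \<le> froberg_step e h (d2 - 1)"
  proof (cases "\<forall>j\<le>d2. shift_diff e h j > 0")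
    case True
    then have "\<And>j. j \<le> d2 \<Longrightarrow> froberg_step e h j = shift_diff e h j"
      by (auto simp: froberg_step_eq)
    then show ?thesis using assms[of d1 d2] True d by auto
  next
    case False
    then have "froberg_step e h d2 = 0" by (auto simp: froberg_step_eq)
    then show ?thesis using froberg_step_nonneg[of e h "d2 - 1"] by simp
  qed
qed

text \<open>The degree-wise increments of h(z)(1 - z^e) are those of (1 - z) h(z) shifted by e, so
  before h reaches its peak this reduces to the previous lemma applied to the truncated
  increments, and beyond it h itself is non-increasing.\<close>

lemma unimodal_froberg_step:
  assumes h: "unimodal h" and incr: "unimodal (froberg_step 1 h)" and e: "e \<ge> 1"
  shows "unimodal (froberg_step e h)"
proof (rule unimodal_froberg_stepI)
  fix d1 d2
  let ?c = "shift_diff e h" and ?D = "shift_diff 1 h"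
  assume d: "0 < d1" "d1 \<le> d2" and pos: "\<forall>j\<le>d2. ?c j > 0" and fall: "?c d1 \<le> ?c (d1 - 1)"
  have incr_diff: "?c d - ?c (d - 1) = shift_diff e ?D d" if "0 < d" for d
    using fun_cong[OF shift_diff_commute[OF e, of h], of d] that by (simp add: shift_diff_def)
  have "shift_diff e ?D d2 \<le> 0"
  proof (cases "\<forall>j\<le>d2. ?D j > 0")
    case True
    then have "\<And>j. j \<le> d2 \<Longrightarrow> froberg_step 1 h j = ?D j" by (auto simp: froberg_step_eq)
    then have truncated: "shift_diff e (froberg_step 1 h) d = shift_diff e ?D d" if "d \<le> d2" for d
      using that unfolding shift_diff_def by simp
    have "shift_diff e (froberg_step 1 h) d1 \<le> 0"
      using truncated[of d1] incr_diff[of d1] fall d by simp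
    then show ?thesis
      using unimodal_shift_diff_nonpos[OF incr froberg_step_nonneg e d] truncated[of d2] by simp
  next
    case False
    define u where "u = (LEAST j. \<not> ?D j > 0)"
    have u: "u \<le> d2" "\<not> ?D u > 0"
      using False Least_le[of "\<lambda>j. \<not> ?D j > 0"] LeastI[of "\<lambda>j. \<not> ?D j > 0"]
      unfolding u_def by (auto intro: order_trans)
    have below_u: "?D j > 0" if "j < u" for j
      using not_less_Least[of j "\<lambda>j. \<not> ?D j > 0"] that unfolding u_def by blast
    have "0 < u" using u(2) pos e by (cases "u = 0") (auto simp: shift_diff_def)
    then have antimono: "\<And>a b. u - 1 \<le> b \<Longrightarrow> b \<le> a \<Longrightarrow> h a \<le> h b"
      using unimodal_antimono[OF h] u(2) by (simp add: shift_diff_def)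
    have "?D d2 \<le> 0" using antimono[of "d2 - 1" d2] u(1) d by (simp add: shift_diff_def)
    moreover have "d2 - e < u" if "\<not> d2 < e"
    proof (rule ccontr)
      assume "\<not> d2 - e < u"
      then have "h d2 \<le> h (d2 - e)" using antimono[of "d2 - e" d2] by simp
      then show False using pos that by (auto simp: shift_diff_def)
    qed
    ultimately show ?thesis using below_u[of "d2 - e"] by (cases "d2 < e") (auto simp: shift_diff_def[of e])
  qed
  then show "?c d2 \<le> ?c (d2 - 1)" using incr_diff[of d2] d by simp
qed

fun admissible :: "nat \<Rightarrow> (nat \<Rightarrow> rat) \<Rightarrow> bool" where
  "admissible 0 h \<longleftrightarrow> h = (\<lambda>d. if d = 0 then 1 else 0)"
| "admissible (Suc n) h \<longleftrightarrow>
     h 0 = 1 \<and> (\<forall>d. h d \<in> \<nat>) \<and> unimodal h \<and> admissible n (froberg_step 1 h)"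

lemma froberg_step_unit:
  assumes "e \<ge> 1"
  shows "froberg_step e (\<lambda>d. if d = 0 then 1 else 0) = (\<lambda>d. if d = 0 then 1 else 0)"
proof
  fix d
  have "\<not> shift_diff e (\<lambda>d. if d = 0 then 1 else 0) 1 > 0"
    using assms by (simp add: shift_diff_def)
  then show "froberg_step e (\<lambda>d. if d = 0 then 1 else 0) d = (if d = 0 then 1 else 0)"
    using assms by (cases d) (auto simp: froberg_step_eq shift_diff_def)
qed

lemma admissible_unimodal: "admissible n h \<Longrightarrow> unimodal h"
  by (cases n) (auto simp: unimodal_def)

lemma admissible_one_if_zero:
  "admissible 0 h \<Longrightarrow> admissible 1 h"
  using froberg_step_unit[of 1] by (auto simp: unimodal_def)

lemma admissible_froberg_step:
  assumes "admissible n h" "1 \<le> e"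
  shows "admissible n (froberg_step e h)"
  using assms
proof (induction n arbitrary: h)
  case 0
  then show ?case using froberg_step_unit by simp
next
  case (Suc n)
  then have h: "h 0 = 1" "\<And>d. h d \<in> \<nat>" "unimodal h" "admissible n (froberg_step 1 h)"
    by auto
  have "froberg_step e h 0 = 1" using h(1) Suc.prems(2) by (simp add: froberg_step_eq shift_diff_def)
  moreover have "admissible n (froberg_step 1 (froberg_step e h))"
    using Suc.IH[OF h(4) Suc.prems(2)] froberg_step_commute[OF Suc.prems(2)] by simp
  moreover have "unimodal (froberg_step e h)"
    using unimodal_froberg_step[OF h(3) admissible_unimodal[OF h(4)] Suc.prems(2)] .
  ultimately show ?case using froberg_step_Nats[OF h(2)] by simp
qed

lemma inverse_one_minus_X_power_Suc_mult:
  "inverse ((1 - fps_X) ^ Suc n :: rat fps) * (1 - fps_X) = inverse ((1 - fps_X) ^ n)"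
proof -
  have "inverse ((1 - fps_X) ^ Suc n :: rat fps) * (1 - fps_X) =
      inverse ((1 - fps_X) ^ n) * (inverse (1 - fps_X) * (1 - fps_X))"
    by (simp only: power_Suc fps_inverse_mult ac_simps)
  also have "inverse (1 - fps_X :: rat fps) * (1 - fps_X) = 1" by (rule inverse_mult_eq_1) simp
  finally show ?thesis by simp
qed

lemma shift_diff_one_inverse_one_minus_X_power:
  "shift_diff 1 (fps_nth (inverse ((1 - fps_X) ^ Suc n :: rat fps))) =
     fps_nth (inverse ((1 - fps_X) ^ n))"
  using fps_nth_Abs_fps_mult_one_minus_X_power[of "fps_nth (inverse ((1 - fps_X) ^ Suc n))" 1]
  by (simp only: power_one_right fps_nth_inverse inverse_one_minus_X_power_Suc_mult)

lemma fps_nth_inverse_one_minus_X_power: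
  "fps_nth (inverse ((1 - fps_X) ^ Suc n :: rat fps)) d \<in> \<nat> \<and>
   fps_nth (inverse ((1 - fps_X) ^ Suc n :: rat fps)) d \<ge> 1"
proof (induction n arbitrary: d)
  case 0
  then show ?case by (simp add: fps_inverse_one_minus_fps_X)
next
  case (Suc n)
  let ?H = "fps_nth (inverse ((1 - fps_X) ^ Suc (Suc n) :: rat fps))"
  have rec: "?H d = (if d = 0 then 0 else ?H (d - 1)) + fps_nth (inverse ((1 - fps_X) ^ Suc n)) d"
    for d
    using fun_cong[OF shift_diff_one_inverse_one_minus_X_power[of "Suc n"], of d]
    unfolding shift_diff_def by (auto split: if_splits)
  note prev = Suc.IH
  have "?H d \<in> \<nat> \<and> ?H d \<ge> 1" for d
  proof (induction d)
    case 0
    then show ?case using rec[of 0] prev[of 0] by simp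
  next
    case (Suc d)
    then show ?case using rec[of "Suc d"] prev[of "Suc d"] by (auto elim!: Nats_cases)
  qed
  then show ?case .
qed

lemma admissible_inverse_one_minus_X_power:
  "admissible n (trunc_pos (inverse ((1 - fps_X) ^ n)))"
proof (induction n)
  case 0
  have "trunc_pos (inverse ((1 - fps_X) ^ 0)) = (\<lambda>d. if d = 0 then 1 else 0)"
    by (rule ext) (auto simp: trunc_pos_def)
  then show ?case by simp
next
  case (Suc n)
  let ?H = "\<lambda>n. inverse ((1 - fps_X) ^ n) :: rat fps"
  have H: "trunc_pos (?H (Suc n)) = fps_nth (?H (Suc n))"
    using fps_nth_inverse_one_minus_X_power[of n]
    by (intro ext) (auto simp: trunc_pos_def intro: less_le_trans[OF zero_less_one])
  have "froberg_step 1 (trunc_pos (?H (Suc n))) = trunc_pos (?H n)"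
    using froberg_step_trunc_pos[of 1 "?H (Suc n)"] inverse_one_minus_X_power_Suc_mult[of n] by simp
  moreover have "unimodal (fps_nth (?H (Suc n)))"
  proof (cases n)
    case 0
    then show ?thesis by (auto simp: unimodal_def fps_inverse_one_minus_fps_X)
  next
    case (Suc m)
    have "fps_nth (?H (Suc n)) (d - 1) < fps_nth (?H (Suc n)) d" if "0 < d" for d
      using fun_cong[OF shift_diff_one_inverse_one_minus_X_power[of n], of d]
        fps_nth_inverse_one_minus_X_power[of m d] that Suc by (simp add: shift_diff_def)
    then show ?thesis unfolding unimodal_def by (meson le_less_trans not_le)
  qed
  moreover have "fps_nth (?H (Suc n)) 0 = 1"
    using startsby_one_power[of "1 - fps_X :: rat fps" "Suc n"] by simp
  ultimately show ?case
    using Suc.IH H fps_nth_inverse_one_minus_X_power[of n] by (simp del: power_Suc)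
qed

lemma froberg_series_Cons:
  "froberg_series n (e # ds) = froberg_series n ds * (1 - fps_X ^ e)"
proof -
  have "(\<Prod>j<length (e # ds). (1 - fps_X ^ ((e # ds) ! j) :: rat fps)) =
        (1 - fps_X ^ e) * (\<Prod>j<length ds. 1 - fps_X ^ (ds ! j))"
    by (simp only: length_Cons prod.lessThan_Suc_shift nth_Cons_0 nth_Cons_Suc)
  then show ?thesis unfolding froberg_series_def by (simp only:) (simp add: algebra_simps)
qed

lemma froberg_Cons: "e \<ge> 1 \<Longrightarrow> froberg n (e # ds) = froberg_step e (froberg n ds)"
  unfolding froberg_def froberg_series_Cons by (simp add: froberg_step_trunc_pos)

lemma admissible_froberg:
  assumes "\<forall>d\<in>set ds. d > 0"
  shows "admissible n (froberg n ds)"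
  using assms
proof (induction ds)
  case Nil
  show ?case
    using admissible_inverse_one_minus_X_power[of n] by (simp add: froberg_def froberg_series_def)
next
  case (Cons e ds)
  then show ?case using admissible_froberg_step by (simp add: froberg_Cons)
qed

section \<open>Monomials and the reverse lexicographic order\<close>

lemma mdeg_fun_upd:
  assumes "i < l"
  shows "mdeg l (a(i := x)) + a i = mdeg l a + x"
proof -
  have "mdeg l a = a i + (\<Sum>j\<in>{..<l} - {i}. a j)" "mdeg l (a(i := x)) = x + (\<Sum>j\<in>{..<l} - {i}. a j)"
    unfolding mdeg_def using assms by (simp_all add: sum.remove)
  then show ?thesis by simp
qed

lemma mdeg_lower:
  assumes "i < l" "a i > 0"
  shows "mdeg l (a(i := a i - 1)) = mdeg l a - 1" "mdeg l a > 0"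
  using mdeg_fun_upd[OF assms(1), of a "a i - 1"] assms(2) by simp_all

lemma mdeg_Suc: "mdeg (Suc k) a = mdeg k a + a k"
  unfolding mdeg_def by simp

lemma monomials_fun_upd: "a \<in> monomials l \<Longrightarrow> i < l \<Longrightarrow> a(i := x) \<in> monomials l"
  unfolding monomials_def by auto

lemma monomials_Suc_fun_upd_last: "a \<in> monomials (Suc k) \<Longrightarrow> a(k := 0) \<in> monomials k"
  unfolding monomials_def by (auto simp: less_Suc_eq_le)

lemma monomials_subset_Suc: "monomials k \<subseteq> monomials (Suc k)"
  unfolding monomials_def by auto

lemma monomials_last_zero: "a \<in> monomials k \<Longrightarrow> a k = 0"
  unfolding monomials_def by simp

lemma mdeg_Suc_monomials: "a \<in> monomials k \<Longrightarrow> mdeg (Suc k) a = mdeg k a"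
  by (simp add: mdeg_Suc monomials_last_zero)

lemma mdeg_pos_ex: "a \<in> monomials l \<Longrightarrow> mdeg l a > 0 \<Longrightarrow> \<exists>i<l. a i > 0"
  unfolding mdeg_def by (metis lessThan_iff neq0_conv sum.neutral)

lemma finite_monomials_deg: "finite {a \<in> monomials l. mdeg l a = d}"
proof -
  let ?ext = "\<lambda>f i. if i < l then f i else 0"
  have "a \<in> ?ext ` ({..<l} \<rightarrow>\<^sub>E {..d})" if "a \<in> monomials l" "mdeg l a = d" for a
  proof
    have "a i \<le> d" if "i < l" for i
      using member_le_sum[of i "{..<l}" a] that \<open>mdeg l a = d\<close> unfolding mdeg_def by simp
    then show "restrict a {..<l} \<in> {..<l} \<rightarrow>\<^sub>E {..d}" by auto
    show "a = ?ext (restrict a {..<l})"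
      using \<open>a \<in> monomials l\<close> unfolding monomials_def by (auto simp: fun_eq_iff)
  qed
  then have "{a \<in> monomials l. mdeg l a = d} \<subseteq> ?ext ` ({..<l} \<rightarrow>\<^sub>E {..d})" by blast
  then show ?thesis by (rule finite_subset) (intro finite_imageI finite_PiE; simp)
qed

lemma mdvd_fun_upd_lower: "mdvd (a(i := a i - 1)) a"
  unfolding mdvd_def by auto

lemma mdvd_strict_lower:
  assumes "mdvd b a" "b \<noteq> a" "a \<in> monomials l"
  obtains i where "i < l" "b i < a i" "mdvd b (a(i := a i - 1))"
proof -
  obtain i where "b i \<noteq> a i" using assms(2) by auto
  then have "b i < a i" using assms(1) unfolding mdvd_def by (simp add: le_neq_implies_less)
  moreover have "i < l" using calculation assms(3) unfolding monomials_def by (cases "i < l") auto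
  moreover have "mdvd b (a(i := a i - 1))" using assms(1) calculation(1) unfolding mdvd_def by auto
  ultimately show ?thesis using that by blast
qed

lemma monomial_ideal_complI:
  assumes sub: "S \<subseteq> monomials l"
    and lower: "\<And>a i. a \<in> S \<Longrightarrow> i < l \<Longrightarrow> a i > 0 \<Longrightarrow> a(i := a i - 1) \<in> S"
  shows "monomial_ideal l (monomials l - S)"
proof -
  have "b \<in> S" if "a \<in> S" "b \<in> monomials l" "mdvd b a" for a b
    using that
  proof (induction "mdeg l a" arbitrary: a rule: less_induct)
    case less
    show ?case
    proof (cases "b = a")
      case False
      with less.prems sub obtain i where i: "i < l" "b i < a i" "mdvd b (a(i := a i - 1))"
        by (meson mdvd_strict_lower subsetD)
      then have "a(i := a i - 1) \<in> S" "mdeg l (a(i := a i - 1)) < mdeg l a"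
        using lower[OF less.prems(1)] mdeg_lower[of i l a] by auto
      then show ?thesis using less.hyps less.prems(2) i(3) by blast
    qed (use less.prems in simp)
  qed
  then show ?thesis unfolding monomial_ideal_def by blast
qed

lemma hilb_quot_compl:
  assumes "S \<subseteq> monomials l"
  shows "hilb_quot l (monomials l - S) d = card {a \<in> S. mdeg l a = d}"
proof -
  have "{a \<in> monomials l. mdeg l a = d \<and> a \<notin> monomials l - S} = {a \<in> S. mdeg l a = d}"
    using assms by auto
  then show ?thesis unfolding hilb_quot_def by simp
qed

lemma min_gens_lower_notin:
  assumes "N \<in> min_gens l K" "N i > 0"
  shows "N(i := N i - 1) \<notin> K"
proof
  assume "N(i := N i - 1) \<in> K"
  then have "N(i := N i - 1) = N" using assms(1) mdvd_fun_upd_lower unfolding min_gens_def by blast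
  then have "N i - 1 = N i" by (metis fun_upd_same)
  then show False using assms(2) by simp
qed

lemma min_gensI_lower:
  assumes K: "monomial_ideal l K" and N: "N \<in> K"
    and lower: "\<And>i. i < l \<Longrightarrow> N i > 0 \<Longrightarrow> N(i := N i - 1) \<notin> K"
  shows "N \<in> min_gens l K"
  unfolding min_gens_def
proof (intro CollectI conjI ballI impI N)
  fix b assume b: "b \<in> K" "mdvd b N"
  show "b = N"
  proof (rule ccontr)
    assume "b \<noteq> N"
    moreover have "N \<in> monomials l" using K N unfolding monomial_ideal_def by blast
    ultimately obtain i where "i < l" "b i < N i" "mdvd b (N(i := N i - 1))"
      using mdvd_strict_lower b(2) by blast
    moreover have "N(i := N i - 1) \<in> monomials l"
      using monomials_fun_upd \<open>N \<in> monomials l\<close> calculation(1) by blast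
    ultimately have "N(i := N i - 1) \<in> K" using K b(1) unfolding monomial_ideal_def by blast
    then show False using lower \<open>i < l\<close> \<open>b i < N i\<close> by simp
  qed
qed

text \<open>Split off the power of the last variable.\<close>

lemma card_monomials_Suc_cone:
  assumes S0: "S0 \<subseteq> monomials k"
  shows "card {a \<in> monomials (Suc k). mdeg (Suc k) a = d \<and> a(k := 0) \<in> S0} =
    (\<Sum>i\<le>d. card {m \<in> S0. mdeg k m = i})"
proof -
  let ?layer = "\<lambda>i. {m \<in> S0. mdeg k m = i}" and ?lift = "\<lambda>i m. m(k := d - i)"
  have last: "m k = 0" if "m \<in> S0" for m using that S0 monomials_last_zero by blast
  have "{a \<in> monomials (Suc k). mdeg (Suc k) a = d \<and> a(k := 0) \<in> S0} =
     (\<Union>i\<le>d. ?lift i ` ?layer i)" (is "?L = ?R")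
  proof
    show "?L \<subseteq> ?R"
    proof
      fix a assume a: "a \<in> ?L"
      let ?m = "a(k := 0)"
      have "mdeg k ?m + a k = d"
        using a mdeg_fun_upd[of k "Suc k" a 0] mdeg_Suc_monomials[OF monomials_Suc_fun_upd_last]
        by auto
      then have "a = ?lift (mdeg k ?m) ?m" by auto
      then show "a \<in> ?R" using a \<open>mdeg k ?m + a k = d\<close>
        by (intro UN_I[of "mdeg k ?m"] image_eqI[of a _ ?m]) auto
    qed
  next
    show "?R \<subseteq> ?L"
    proof
      fix a assume "a \<in> ?R"
      then obtain i m where im: "i \<le> d" "m \<in> S0" "mdeg k m = i" "a = m(k := d - i)" by auto
      have "m \<in> monomials (Suc k)" using im(2) S0 monomials_subset_Suc by blast
      then have "a \<in> monomials (Suc k)" using im(4) monomials_fun_upd by blast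
      moreover have "mdeg (Suc k) a = d"
        using mdeg_fun_upd[of k "Suc k" m "d - i"] im last[OF im(2)]
          mdeg_Suc_monomials[of m k] im(2) S0 by auto
      moreover have "a(k := 0) = m" using im last[of m] by auto
      ultimately show "a \<in> ?L" using im by auto
    qed
  qed
  moreover have "inj_on (?lift i) (?layer i)" for i
    by (rule inj_onI) (metis fun_upd_triv fun_upd_upd last mem_Collect_eq)
  moreover have "?lift i ` ?layer i \<inter> ?lift j ` ?layer j = {}" if "i \<le> d" "j \<le> d" "i \<noteq> j" for i j
    using that by auto (metis fun_upd_same diff_diff_cancel)
  moreover have "finite (?layer i)" for i
    by (rule finite_subset[OF _ finite_monomials_deg[of k i]]) (use S0 in auto)
  ultimately show ?thesis by (simp add: card_UN_disjoint card_image)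
qed

lemma revlex_gt_irrefl: "\<not> revlex_gt l a a"
  unfolding revlex_gt_def by auto

lemma revlex_gt_trans:
  assumes "revlex_gt l a b" "revlex_gt l b c"
  shows "revlex_gt l a c"
proof (cases "mdeg l a = mdeg l b \<and> mdeg l b = mdeg l c")
  case False
  then show ?thesis using assms unfolding revlex_gt_def by auto
next
  case True
  obtain s1 where s1: "s1 < l" "\<forall>t. s1 < t \<and> t < l \<longrightarrow> a t = b t" "a s1 < b s1"
    using assms(1) True unfolding revlex_gt_def by auto
  obtain s2 where s2: "s2 < l" "\<forall>t. s2 < t \<and> t < l \<longrightarrow> b t = c t" "b s2 < c s2"
    using assms(2) True unfolding revlex_gt_def by auto
  have "a (max s1 s2) < c (max s1 s2)" "\<forall>t. max s1 s2 < t \<and> t < l \<longrightarrow> a t = c t"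
    using s1 s2 by (cases s1 s2 rule: linorder_cases; auto)+
  then show ?thesis using True s1(1) s2(1) unfolding revlex_gt_def
    by (intro disjI2 conjI exI[of _ "max s1 s2"]) auto
qed

lemma revlex_gt_asym: "revlex_gt l a b \<Longrightarrow> \<not> revlex_gt l b a"
  using revlex_gt_trans revlex_gt_irrefl by blast

lemma revlex_gt_total:
  assumes "a \<in> monomials l" "b \<in> monomials l" "a \<noteq> b" "mdeg l a = mdeg l b"
  shows "revlex_gt l a b \<or> revlex_gt l b a"
proof -
  let ?D = "{s. a s \<noteq> b s}"
  have "?D \<subseteq> {..<l}" using assms(1,2) unfolding monomials_def by (auto, metis not_less)
  moreover have "?D \<noteq> {}" using assms(3) by auto
  ultimately obtain s where s: "s < l" "a s \<noteq> b s" "\<forall>t. s < t \<and> t < l \<longrightarrow> a t = b t"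
    using Max_in[of ?D] Max_ge[of ?D] finite_subset[of ?D "{..<l}"]
    by (intro that[of "Max ?D"]) (auto simp: not_le[symmetric])
  show ?thesis
  proof (cases "a s < b s")
    case True
    then show ?thesis using s assms(4) unfolding revlex_gt_def by blast
  next
    case False
    then have "b s < a s" "\<forall>t. s < t \<and> t < l \<longrightarrow> b t = a t" using s by auto
    then show ?thesis using s(1,2) assms(4) unfolding revlex_gt_def by auto
  qed
qed

lemma revlex_gt_last:
  assumes "mdeg (Suc k) a = mdeg (Suc k) b" "a k < b k"
  shows "revlex_gt (Suc k) a b"
  unfolding revlex_gt_def using assms by (intro disjI2) (auto intro!: exI[of _ k])

lemma revlex_gt_Suc_iff:
  assumes "a \<in> monomials k" "b \<in> monomials k"
  shows "revlex_gt (Suc k) a b \<longleftrightarrow> revlex_gt k a b"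
proof -
  have last: "a k = b k" using monomials_last_zero[OF assms(1)] monomials_last_zero[OF assms(2)] by simp
  have "(\<exists>s<Suc k. a s \<noteq> b s \<and> (\<forall>t. s < t \<and> t < Suc k \<longrightarrow> a t = b t) \<and> a s < b s) \<longleftrightarrow>
        (\<exists>s<k. a s \<noteq> b s \<and> (\<forall>t. s < t \<and> t < k \<longrightarrow> a t = b t) \<and> a s < b s)"
    using last by (metis less_SucE less_SucI)
  then show ?thesis
    unfolding revlex_gt_def using mdeg_Suc_monomials[OF assms(1)] mdeg_Suc_monomials[OF assms(2)] by simp
qed

lemma revlex_gt_shift_last:
  "revlex_gt (Suc k) (a(k := a k + c)) (b(k := b k + c)) \<longleftrightarrow> revlex_gt (Suc k) a b"
proof -
  have "mdeg (Suc k) (a(k := a k + c)) = mdeg (Suc k) a + c" for a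
    using mdeg_fun_upd[of k "Suc k" a "a k + c"] by simp
  moreover have "(\<exists>s<Suc k. (a(k := a k + c)) s \<noteq> (b(k := b k + c)) s \<and>
          (\<forall>t. s < t \<and> t < Suc k \<longrightarrow> (a(k := a k + c)) t = (b(k := b k + c)) t) \<and>
          (a(k := a k + c)) s < (b(k := b k + c)) s) \<longleftrightarrow>
        (\<exists>s<Suc k. a s \<noteq> b s \<and> (\<forall>t. s < t \<and> t < Suc k \<longrightarrow> a t = b t) \<and> a s < b s)"
    by (intro ex_cong1) auto
  ultimately show ?thesis unfolding revlex_gt_def by simp
qed

locale finite_strict_order =
  fixes T :: "'a set" and r :: "'a \<Rightarrow> 'a \<Rightarrow> bool"
  assumes finite: "finite T"
    and irrefl: "\<And>x. x \<in> T \<Longrightarrow> \<not> r x x"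
    and trans: "\<And>x y z. r x y \<Longrightarrow> r y z \<Longrightarrow> r x z"
    and total: "\<And>x y. x \<in> T \<Longrightarrow> y \<in> T \<Longrightarrow> x \<noteq> y \<Longrightarrow> r x y \<or> r y x"
begin

definition rank :: "'a \<Rightarrow> nat" where
  "rank x = card {y \<in> T. r x y}"

lemma rank_less:
  assumes "x \<in> T" "y \<in> T" "r x y"
  shows "rank y < rank x"
proof -
  have "{z \<in> T. r y z} \<subset> {z \<in> T. r x z}" using assms trans irrefl by blast
  then show ?thesis unfolding rank_def using finite by (intro psubset_card_mono) auto
qed

lemma inj_on_rank: "inj_on rank T"
  unfolding inj_on_def using rank_less total by (metis less_irrefl)

lemma rank_image: "rank ` T = {..<card T}"
proof -
  have "rank x < card T" if "x \<in> T" for x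
    unfolding rank_def using finite irrefl that by (intro psubset_card_mono) auto
  then have "rank ` T \<subseteq> {..<card T}" by auto
  moreover have "card (rank ` T) = card {..<card T}" using card_image[OF inj_on_rank] by simp
  ultimately show ?thesis by (intro card_subset_eq) auto
qed

lemma card_rank_less: "card {x \<in> T. rank x < N} = min N (card T)"
proof -
  have "card {x \<in> T. rank x < N} = card (rank ` {x \<in> T. rank x < N})"
    by (rule card_image[symmetric]) (rule inj_on_subset[OF inj_on_rank]; auto)
  also have "rank ` {x \<in> T. rank x < N} = {y \<in> rank ` T. y < N}" by auto
  also have "\<dots> = {..<min N (card T)}" unfolding rank_image by auto
  finally show ?thesis by simp
qed

end

section \<open>Adding a variable\<close>

locale froberg_extension =
  fixes h :: "nat \<Rightarrow> rat" and k :: nat and K0 :: "(nat \<Rightarrow> nat) set"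
  assumes h_0: "h 0 = 1" and h_Nats: "\<And>d. h d \<in> \<nat>" and h_unimodal: "unimodal h"
    and K0_ideal: "monomial_ideal k K0" and K0_almost_revlex: "almost_revlex k K0"
    and K0_hilb: "\<And>d. of_nat (hilb_quot k K0 d) = froberg_step 1 h d"
begin

definition std0 :: "(nat \<Rightarrow> nat) set" where
  "std0 = monomials k - K0"

definition rising :: "nat \<Rightarrow> bool" where
  "rising d \<longleftrightarrow> (\<forall>j. 0 < j \<and> j \<le> d \<longrightarrow> h (j - 1) < h j)"

text \<open>Only meaningful if h stops rising, which all lemmas about it assume.\<close>

definition peak :: nat where
  "peak = (LEAST d. \<not> rising (Suc d))"

lemma rising_downward: "rising d \<Longrightarrow> d' \<le> d \<Longrightarrow> rising d'"
  unfolding rising_def by auto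

lemma rising_iff_le_peak:
  assumes "\<not> rising d"
  shows "rising d' \<longleftrightarrow> d' \<le> peak"
proof -
  have "d \<noteq> 0" using assms by (auto simp: rising_def)
  then have "\<exists>j. \<not> rising (Suc j)" using assms by (intro exI[of _ "d - 1"]) simp
  then have not_rising: "\<not> rising (Suc peak)" unfolding peak_def by (rule LeastI_ex)
  have "rising d'" if "d' \<le> peak" for d'
  proof (cases d')
    case (Suc j)
    then show ?thesis using that not_less_Least[of j "\<lambda>d. \<not> rising (Suc d)"] peak_def by simp
  qed (auto simp: rising_def)
  then show ?thesis using not_rising rising_downward by (meson not_less_eq_eq)
qed

lemma peak_less: "\<not> rising d \<Longrightarrow> peak < d"
  using rising_iff_le_peak by (meson not_le)

lemma h_antimono_beyond_peak:
  assumes "\<not> rising d" "peak \<le> b" "b \<le> a"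
  shows "h a \<le> h b"
proof -
  obtain j where j: "0 < j" "j \<le> Suc peak" "h j \<le> h (j - 1)"
    using rising_iff_le_peak[OF assms(1), of "Suc peak"] unfolding rising_def by (auto simp: not_less)
  have "\<not> j \<le> peak" using j rising_iff_le_peak[OF assms(1), of peak] unfolding rising_def by auto
  then have "j = Suc peak" using j(2) by simp
  then show ?thesis using unimodal_antimono[OF h_unimodal j(1,3)] assms(2,3) by simp
qed

lemma froberg_step_rising:
  assumes "rising d" "j \<le> d"
  shows "froberg_step 1 h j = shift_diff 1 h j"
proof -
  have "shift_diff 1 h i > 0" if "i \<le> j" for i
    using assms that h_0 unfolding rising_def shift_diff_def by (cases "i = 0") auto
  then show ?thesis by (simp add: froberg_step_eq)
qed

definition std_low :: "(nat \<Rightarrow> nat) set" where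
  "std_low = {a \<in> monomials (Suc k). rising (mdeg (Suc k) a) \<and> a(k := 0) \<in> std0}"

definition mult_last :: "nat \<Rightarrow> (nat \<Rightarrow> nat) \<Rightarrow> nat \<Rightarrow> nat" where
  "mult_last e c = c(k := c k + e)"

lemma mdeg_mult_last: "mdeg (Suc k) (mult_last e c) = mdeg (Suc k) c + e"
  unfolding mult_last_def using mdeg_fun_upd[of k "Suc k" c "c k + e"] by simp

lemma mult_last_0 [simp]: "mult_last 0 c = c"
  unfolding mult_last_def by simp

lemma mult_last_monomials: "c \<in> monomials (Suc k) \<Longrightarrow> mult_last e c \<in> monomials (Suc k)"
  unfolding mult_last_def by (simp add: monomials_fun_upd)

lemma inj_mult_last: "inj (mult_last e)"
proof (rule injI)
  fix x y assume "mult_last e x = mult_last e y"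
  then have "x(k := x k + e) = y(k := y k + e)" unfolding mult_last_def .
  then have "x(k := x k + e, k := x k) = y(k := y k + e, k := y k)"
    by (metis fun_upd_same add_right_cancel)
  then show "x = y" by simp
qed

lemma mult_last_last: "mult_last e c k = c k + e"
  unfolding mult_last_def by simp

lemma mult_last_eq_iff: "a = mult_last e c \<longleftrightarrow> e \<le> a k \<and> c = a(k := a k - e)"
  unfolding mult_last_def by (auto simp: fun_eq_iff)

definition peak_layer :: "(nat \<Rightarrow> nat) set" where
  "peak_layer = {b \<in> std_low. mdeg (Suc k) b = peak}"

lemma peak_layer_subset: "peak_layer \<subseteq> monomials (Suc k)"
  unfolding peak_layer_def std_low_def by auto

lemma mdeg_peak_layer: "b \<in> peak_layer \<Longrightarrow> mdeg (Suc k) b = peak"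
  unfolding peak_layer_def by simp

sublocale peak_order: finite_strict_order peak_layer "revlex_gt (Suc k)"
proof
  show "finite peak_layer"
    by (rule finite_subset[OF _ finite_monomials_deg[of "Suc k" peak]])
      (use peak_layer_subset mdeg_peak_layer in auto)
  show "\<And>x y. x \<in> peak_layer \<Longrightarrow> y \<in> peak_layer \<Longrightarrow> x \<noteq> y \<Longrightarrow>
      revlex_gt (Suc k) x y \<or> revlex_gt (Suc k) y x"
    using revlex_gt_total peak_layer_subset mdeg_peak_layer by (simp add: subset_iff)
qed (simp_all add: revlex_gt_irrefl revlex_gt_trans[of "Suc k"])

definition std_high :: "(nat \<Rightarrow> nat) set" where
  "std_high = {a \<in> monomials (Suc k). \<not> rising (mdeg (Suc k) a) \<and>
     (\<exists>c \<in> peak_layer. a = mult_last (mdeg (Suc k) a - peak) c \<and>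
        of_nat (peak_order.rank c) < h (mdeg (Suc k) a))}"

definition std :: "(nat \<Rightarrow> nat) set" where
  "std = std_low \<union> std_high"

lemma std_subset: "std \<subseteq> monomials (Suc k)"
  unfolding std_def std_low_def std_high_def by auto

lemma mem_std_rising:
  assumes "a \<in> monomials (Suc k)" "rising (mdeg (Suc k) a)"
  shows "a \<in> std \<longleftrightarrow> a(k := 0) \<in> std0"
  using assms unfolding std_def std_low_def std_high_def by auto

lemma mult_last_mem_std:
  assumes "\<not> rising d" "c \<in> peak_layer" "peak \<le> d'" "d' = peak \<or> of_nat (peak_order.rank c) < h d'"
  shows "mult_last (d' - peak) c \<in> std"
proof (cases "d' = peak")
  case True
  then show ?thesis using assms(2) unfolding std_def peak_layer_def by simp
next
  case False
  let ?a = "mult_last (d' - peak) c"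
  have "mdeg (Suc k) ?a = d'" using mdeg_mult_last mdeg_peak_layer[OF assms(2)] assms(3) by simp
  moreover have "\<not> rising d'" using rising_iff_le_peak[OF assms(1)] assms(3) False by simp
  moreover have "?a \<in> monomials (Suc k)"
    using mult_last_monomials assms(2) peak_layer_subset by blast
  ultimately show ?thesis using assms(2,4) False unfolding std_def std_high_def by auto
qed

lemma std_beyond_peak_elim:
  assumes "\<not> rising d" "a \<in> std" "mdeg (Suc k) a = d'" "peak \<le> d'"
  obtains c where "c \<in> peak_layer" "a = mult_last (d' - peak) c"
    "d' = peak \<or> of_nat (peak_order.rank c) < h d'"
proof (cases "rising d'")
  case True
  then have "a \<in> peak_layer"
    using assms rising_iff_le_peak[OF assms(1)] unfolding std_def std_low_def std_high_def peak_layer_def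
    by auto
  then show ?thesis using that[of a] mdeg_peak_layer assms(3) by simp
next
  case False
  then show ?thesis using assms(2,3) that unfolding std_def std_low_def std_high_def by auto
qed

lemma std0_subset: "std0 \<subseteq> monomials k"
  unfolding std0_def by auto

lemma card_std_rising:
  assumes "rising d"
  shows "of_nat (card {a \<in> std. mdeg (Suc k) a = d}) = h d"
proof -
  have "{a \<in> std. mdeg (Suc k) a = d} =
      {a \<in> monomials (Suc k). mdeg (Suc k) a = d \<and> a(k := 0) \<in> std0}"
    using mem_std_rising assms std_subset by blast
  then have "card {a \<in> std. mdeg (Suc k) a = d} = (\<Sum>i\<le>d. card {m \<in> std0. mdeg k m = i})"
    using card_monomials_Suc_cone[OF std0_subset] by simp
  moreover have "card {m \<in> std0. mdeg k m = i} = hilb_quot k K0 i" for i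
    unfolding hilb_quot_def std0_def by (rule arg_cong[where f = card]) auto
  ultimately have "of_nat (card {a \<in> std. mdeg (Suc k) a = d}) = (\<Sum>i\<le>d. froberg_step 1 h i)"
    using K0_hilb by simp
  also have "\<dots> = (\<Sum>i\<le>d. shift_diff 1 h i)" using froberg_step_rising[OF assms] by simp
  finally show ?thesis using sum_shift_diff_one by simp
qed

lemma card_peak_layer:
  assumes "\<not> rising d"
  shows "of_nat (card peak_layer) = h peak"
proof -
  have "peak_layer = {a \<in> std. mdeg (Suc k) a = peak}"
  proof (intro equalityI subsetI)
    fix a assume "a \<in> {a \<in> std. mdeg (Suc k) a = peak}"
    then obtain c where "c \<in> peak_layer" "a = mult_last 0 c"
      using std_beyond_peak_elim[OF assms, of a peak] by auto
    then show "a \<in> peak_layer" by simp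
  qed (auto simp: peak_layer_def std_def)
  then show ?thesis using card_std_rising rising_iff_le_peak[OF assms] by simp
qed

lemma card_std_not_rising:
  assumes "\<not> rising d"
  shows "of_nat (card {a \<in> std. mdeg (Suc k) a = d}) = h d"
proof -
  obtain H where H: "h d = of_nat H" using h_Nats[of d] by (auto elim!: Nats_cases)
  have "{a \<in> std. mdeg (Suc k) a = d} = mult_last (d - peak) ` {c \<in> peak_layer. peak_order.rank c < H}"
  proof
    show "{a \<in> std. mdeg (Suc k) a = d} \<subseteq> mult_last (d - peak) ` {c \<in> peak_layer. peak_order.rank c < H}"
    proof
      fix a assume "a \<in> {a \<in> std. mdeg (Suc k) a = d}"
      then have "a \<in> std" "mdeg (Suc k) a = d" by auto
      then obtain c where "c \<in> peak_layer" "a = mult_last (d - peak) c"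
          "d = peak \<or> of_nat (peak_order.rank c) < h d"
        using std_beyond_peak_elim[OF assms] peak_less[OF assms] less_imp_le by blast
      then have "c \<in> peak_layer" "a = mult_last (d - peak) c" "of_nat (peak_order.rank c) < h d"
        using peak_less[OF assms] by auto
      then show "a \<in> mult_last (d - peak) ` {c \<in> peak_layer. peak_order.rank c < H}" using H by auto
    qed
    show "mult_last (d - peak) ` {c \<in> peak_layer. peak_order.rank c < H} \<subseteq> {a \<in> std. mdeg (Suc k) a = d}"
    proof
      fix a assume "a \<in> mult_last (d - peak) ` {c \<in> peak_layer. peak_order.rank c < H}"
      then obtain c where c: "c \<in> peak_layer" "peak_order.rank c < H" "a = mult_last (d - peak) c"
        by blast
      then have "a \<in> std" using mult_last_mem_std[OF assms c(1), of d] peak_less[OF assms] H by simp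
      moreover have "mdeg (Suc k) a = d"
        using c mdeg_mult_last mdeg_peak_layer peak_less[OF assms] by simp
      ultimately show "a \<in> {a \<in> std. mdeg (Suc k) a = d}" by simp
    qed
  qed
  then have "card {a \<in> std. mdeg (Suc k) a = d} = min H (card peak_layer)"
    using peak_order.card_rank_less card_image[OF inj_on_subset[OF inj_mult_last subset_UNIV]]
    by simp
  moreover have "h d \<le> h peak" using h_antimono_beyond_peak[OF assms] peak_less[OF assms] by simp
  ultimately show ?thesis using card_peak_layer[OF assms] H by simp
qed

lemma hilb_quot_std: "of_nat (hilb_quot (Suc k) (monomials (Suc k) - std) d) = h d"
  using hilb_quot_compl[OF std_subset] card_std_rising card_std_not_rising by (cases "rising d") auto

lemma std0_divisor_closed: "m \<in> std0 \<Longrightarrow> m' \<in> monomials k \<Longrightarrow> mdvd m' m \<Longrightarrow> m' \<in> std0"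
  using K0_ideal unfolding std0_def monomial_ideal_def by blast

lemma std_low_lower:
  assumes "a \<in> std_low" "i < Suc k" "a i > 0"
  shows "a(i := a i - 1) \<in> std_low"
proof -
  have a: "a \<in> monomials (Suc k)" "rising (mdeg (Suc k) a)" "a(k := 0) \<in> std0"
    using assms(1) unfolding std_low_def by auto
  have "(a(i := a i - 1))(k := 0) \<in> std0"
  proof (cases "i = k")
    case False
    then have "(a(i := a i - 1))(k := 0) = (a(k := 0))(i := a i - 1)" "i < k"
      using assms(2) by (auto simp: fun_upd_twist)
    moreover have "(a(k := 0))(i := a i - 1) \<in> monomials k"
      using monomials_fun_upd[OF monomials_Suc_fun_upd_last[OF a(1)]] calculation(2) by blast
    moreover have "mdvd ((a(k := 0))(i := a i - 1)) (a(k := 0))"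
      using False unfolding mdvd_def by auto
    ultimately show ?thesis using std0_divisor_closed[OF a(3)] by simp
  qed (use a in simp)
  moreover have "rising (mdeg (Suc k) (a(i := a i - 1)))"
    using mdeg_lower[of i "Suc k" a, OF assms(2,3)] a(2) rising_downward by simp
  ultimately show ?thesis using monomials_fun_upd[OF a(1) assms(2)] unfolding std_low_def by simp
qed

lemma peak_layer_exchange:
  assumes "b \<in> peak_layer" "i < k" "b i > 0"
  shows "mult_last 1 (b(i := b i - 1)) \<in> peak_layer"
    and "peak_order.rank (mult_last 1 (b(i := b i - 1))) < peak_order.rank b"
proof -
  let ?b' = "mult_last 1 (b(i := b i - 1))"
  have b: "b \<in> std_low" "mdeg (Suc k) b = peak" using assms(1) unfolding peak_layer_def by auto
  have low: "b(i := b i - 1) \<in> std_low" using std_low_lower b(1) assms(2,3) by simp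
  have "mdeg (Suc k) ?b' = peak" using mdeg_mult_last mdeg_lower[of i "Suc k" b] assms b(2) by simp
  moreover have "?b'(k := 0) = (b(i := b i - 1))(k := 0)" unfolding mult_last_def by simp
  moreover have "?b' \<in> monomials (Suc k)" using mult_last_monomials low unfolding std_low_def by blast
  ultimately show b': "?b' \<in> peak_layer"
    using low b unfolding peak_layer_def std_low_def by auto
  have "revlex_gt (Suc k) b ?b'"
    using b(2) \<open>mdeg (Suc k) ?b' = peak\<close> assms(2) by (intro revlex_gt_last) (auto simp: mult_last_last)
  then show "peak_order.rank ?b' < peak_order.rank b" using peak_order.rank_less assms(1) b' by blast
qed

lemma std_high_lower:
  assumes "a \<in> std_high" "i < Suc k" "a i > 0"
  shows "a(i := a i - 1) \<in> std"
proof -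
  define d where "d = mdeg (Suc k) a"
  obtain c where c: "c \<in> peak_layer" "a = mult_last (d - peak) c" "of_nat (peak_order.rank c) < h d"
    and not_rising: "\<not> rising d"
    using assms(1) unfolding std_high_def d_def by auto
  have "peak < d" using peak_less[OF not_rising] .
  obtain c' where c': "c' \<in> peak_layer" "a(i := a i - 1) = mult_last (d - 1 - peak) c'"
    "peak_order.rank c' \<le> peak_order.rank c"
  proof (cases "i = k")
    case True
    have "a(i := a i - 1) = mult_last (d - 1 - peak) c"
      using c(2) True \<open>peak < d\<close> unfolding mult_last_def by (auto simp: fun_eq_iff)
    then show ?thesis using that c(1) by blast
  next
    case False
    then have "i < k" "c i > 0" using assms(2,3) c(2) by (auto simp: mult_last_def)
    moreover have "a(i := a i - 1) = mult_last (d - 1 - peak) (mult_last 1 (c(i := c i - 1)))"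
      using c(2) False \<open>peak < d\<close> by (simp add: mult_last_def fun_upd_twist Suc_diff_Suc)
    ultimately show ?thesis
      using that[of "mult_last 1 (c(i := c i - 1))"] peak_layer_exchange[OF c(1)] less_imp_le by blast
  qed
  have "h d \<le> h (d - 1)" using h_antimono_beyond_peak[OF not_rising] \<open>peak < d\<close> by simp
  then have "of_nat (peak_order.rank c') < h (d - 1)" using c(3) c'(3) by (meson of_nat_le_iff order.strict_trans1 less_le_trans)
  then show ?thesis using mult_last_mem_std[OF not_rising c'(1), of "d - 1"] c'(2) \<open>peak < d\<close> by simp
qed

lemma monomial_ideal_std: "monomial_ideal (Suc k) (monomials (Suc k) - std)"
proof (rule monomial_ideal_complI[OF std_subset])
  fix a i assume "a \<in> std" "i < Suc k" "a i > 0"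
  then show "a(i := a i - 1) \<in> std"
    using std_low_lower std_high_lower unfolding std_def by blast
qed

lemma min_gen_std:
  assumes "N \<in> min_gens (Suc k) (monomials (Suc k) - std)"
  shows "N \<in> monomials (Suc k)" "N \<notin> std"
    and "\<And>i. i < Suc k \<Longrightarrow> N i > 0 \<Longrightarrow> N(i := N i - 1) \<in> std"
proof -
  show N: "N \<in> monomials (Suc k)" "N \<notin> std" using assms unfolding min_gens_def by auto
  show "N(i := N i - 1) \<in> std" if "i < Suc k" "N i > 0" for i
    using min_gens_lower_notin[OF assms that(2)] monomials_fun_upd[OF N(1) that(1)] by blast
qed

text \<open>In a rising degree the construction is a cone over the standard monomials of K0, so both
  monomials avoid the last variable and the almost revlex property of K0 applies.\<close>

lemma almost_revlex_rising:
  assumes N: "N \<in> min_gens (Suc k) (monomials (Suc k) - std)" and M: "M \<in> std"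
    and deg: "mdeg (Suc k) M = d" "mdeg (Suc k) N = d" and rising: "rising d"
    and gt: "revlex_gt (Suc k) M N"
  shows False
proof -
  note N' = min_gen_std[OF N]
  have M': "M \<in> monomials (Suc k)" using M std_subset by blast
  have lower: "(N(i := N i - 1))(k := 0) \<in> std0" if "i < Suc k" "N i > 0" for i
  proof -
    have "rising (mdeg (Suc k) (N(i := N i - 1)))"
      using mdeg_lower[of i "Suc k" N] that deg(2) rising rising_downward by simp
    then show ?thesis using mem_std_rising N'(3)[OF that] monomials_fun_upd[OF N'(1) that(1)] by blast
  qed
  have "N k = 0"
  proof (rule ccontr)
    assume "N k \<noteq> 0"
    then have "N(k := 0) \<in> std0" using lower[of k] by simp
    then show False using N' mem_std_rising deg(2) rising by blast
  qed
  moreover have "M k = 0"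
    using revlex_gt_last[of k N M] deg gt revlex_gt_asym \<open>N k = 0\<close> by fastforce
  ultimately have "M(k := 0) = M" "N(k := 0) = N" by auto
  then have Mk: "M \<in> monomials k" "M \<in> std0" and Nk: "N \<in> monomials k" "N \<in> K0"
    using monomials_Suc_fun_upd_last[OF M'] monomials_Suc_fun_upd_last[OF N'(1)]
      mem_std_rising[OF M'] mem_std_rising[OF N'(1)] M N'(2) deg rising
    unfolding std0_def by auto
  have "N \<in> min_gens k K0"
  proof (rule min_gensI_lower[OF K0_ideal Nk(2)])
    fix i assume "i < k" "N i > 0"
    then have "(N(i := N i - 1))(k := 0) = N(i := N i - 1)" using \<open>N k = 0\<close> by auto
    then show "N(i := N i - 1) \<notin> K0" using lower[of i] \<open>i < k\<close> \<open>N i > 0\<close> unfolding std0_def by simp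
  qed
  then have "M \<in> K0"
    using K0_almost_revlex Mk(1) Nk(1) deg gt revlex_gt_Suc_iff mdeg_Suc_monomials
    unfolding almost_revlex_def by metis
  then show False using Mk(2) unfolding std0_def by simp
qed

lemma min_gen_lower_beyond_peak:
  assumes N: "N \<in> min_gens (Suc k) (monomials (Suc k) - std)" and deg: "mdeg (Suc k) N = d"
    and not_rising: "\<not> rising d" and i: "i < Suc k" "N i > 0"
  obtains c where "c \<in> peak_layer" "N(i := N i - 1) = mult_last (d - 1 - peak) c"
proof -
  have "mdeg (Suc k) (N(i := N i - 1)) = d - 1" using mdeg_lower[of i "Suc k" N] i deg by simp
  moreover have "peak \<le> d - 1" using peak_less[OF not_rising] by simp
  ultimately show ?thesis
    using std_beyond_peak_elim[OF not_rising min_gen_std(3)[OF N i]] that by blast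
qed

text \<open>If the c below were in the peak layer it would have smaller rank than b, putting N into
  std; otherwise lowering the last exponent of N leaves std.\<close>

lemma min_gen_not_mult_last:
  assumes N: "N \<in> min_gens (Suc k) (monomials (Suc k) - std)" and deg: "mdeg (Suc k) N = d"
    and not_rising: "\<not> rising d"
    and b: "b \<in> peak_layer" "of_nat (peak_order.rank b) < h d"
    and bc: "revlex_gt (Suc k) b c" and Nc: "N = mult_last (d - peak) c"
  shows False
proof (cases "c \<in> peak_layer")
  case True
  then have "peak_order.rank c < peak_order.rank b" using peak_order.rank_less b(1) bc by blast
  then have "of_nat (peak_order.rank c) < h d" using b(2) by (meson of_nat_less_iff order.strict_trans)
  then have "N \<in> std" using mult_last_mem_std[OF not_rising True, of d] Nc peak_less[OF not_rising] by simp
  then show False using min_gen_std(2)[OF N] by simp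
next
  case False
  have e: "d - peak \<le> N k" "d - peak \<ge> 1" using Nc peak_less[OF not_rising] by (auto simp: mult_last_last)
  then obtain c' where "c' \<in> peak_layer" "N(k := N k - 1) = mult_last (d - 1 - peak) c'"
    using min_gen_lower_beyond_peak[OF N deg not_rising, of k] by auto
  moreover have "(N(k := N k - 1))(k := N k - 1 - (d - 1 - peak)) = c"
    using Nc e unfolding mult_last_def by (auto simp: fun_eq_iff)
  ultimately show False using False mult_last_eq_iff by force
qed

text \<open>Beyond the peak, M is a peak-layer monomial b times the e-th power of the last variable,
  e = d - peak. If that power divides N, the quotient is revlex-smaller than b; otherwise some
  divisor of N of degree d - 1 in std has too small a last exponent.\<close>

lemma almost_revlex_not_rising:
  assumes N: "N \<in> min_gens (Suc k) (monomials (Suc k) - std)" and M: "M \<in> std"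
    and deg: "mdeg (Suc k) M = d" "mdeg (Suc k) N = d" and not_rising: "\<not> rising d"
    and gt: "revlex_gt (Suc k) M N"
  shows False
proof -
  have "peak < d" using peak_less[OF not_rising] .
  define e where "e = d - peak"
  obtain b where b: "b \<in> peak_layer" "M = mult_last e b" "of_nat (peak_order.rank b) < h d"
    using std_beyond_peak_elim[OF not_rising M deg(1)] \<open>peak < d\<close> unfolding e_def by auto
  show False
  proof (cases "e \<le> N k")
    case True
    define c where "c = N(k := N k - e)"
    have Nc: "N = mult_last e c" using True mult_last_eq_iff c_def by simp
    have "revlex_gt (Suc k) b c" using gt b(2) Nc revlex_gt_shift_last unfolding mult_last_def by simp
    then show False using min_gen_not_mult_last[OF N deg(2) not_rising b(1,3)] Nc e_def by blast
  next
    case False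
    show False
    proof (cases "N k = 0 \<and> e = 1")
      case True
      then have "revlex_gt (Suc k) N M" using revlex_gt_last[of k N M] b(2) deg by (simp add: mult_last_last)
      then show False using gt revlex_gt_asym by blast
    next
      case not_last: False
      obtain i where i: "i < Suc k" "N i > 0" "(N(i := N i - 1)) k < e - 1"
      proof (cases "N k = 0")
        case True
        obtain i where "i < Suc k" "N i > 0"
          using mdeg_pos_ex[OF min_gen_std(1)[OF N]] deg(2) \<open>peak < d\<close> by auto
        then show ?thesis using that[of i] True not_last \<open>peak < d\<close> unfolding e_def by (cases "i = k") auto
      next
        case False
        then show ?thesis using that[of k] \<open>\<not> e \<le> N k\<close> by simp
      qed
      moreover obtain c where "N(i := N i - 1) = mult_last (d - 1 - peak) c"
        using min_gen_lower_beyond_peak[OF N deg(2) not_rising i(1,2)] by blast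
      then have "(N(i := N i - 1)) k = c k + (e - 1)" unfolding e_def by (simp add: mult_last_last)
      ultimately show False by simp
    qed
  qed
qed

lemma almost_revlex_std: "almost_revlex (Suc k) (monomials (Suc k) - std)"
  unfolding almost_revlex_def
proof (intro ballI impI)
  fix M N
  assume "M \<in> monomials (Suc k)" "N \<in> min_gens (Suc k) (monomials (Suc k) - std)"
    and "mdeg (Suc k) M = mdeg (Suc k) N \<and> revlex_gt (Suc k) M N"
  then show "M \<in> monomials (Suc k) - std"
    using almost_revlex_rising almost_revlex_not_rising by blast
qed

theorem exists_almost_revlex_ideal:
  "\<exists>K. monomial_ideal (Suc k) K \<and> almost_revlex (Suc k) K \<and> (\<forall>d. of_nat (hilb_quot (Suc k) K d) = h d)"
  using monomial_ideal_std almost_revlex_std hilb_quot_std by blast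

end

theorem admissible_realisable:
  assumes "admissible n h"
  shows "\<exists>K. monomial_ideal n K \<and> almost_revlex n K \<and> (\<forall>d. of_nat (hilb_quot n K d) = h d)"
  using assms
proof (induction n arbitrary: h)
  case 0
  have "monomials 0 = {\<lambda>_. 0}" unfolding monomials_def by auto
  then have "of_nat (hilb_quot 0 {} d) = h d" for d
    using 0 unfolding hilb_quot_def by (simp add: mdeg_def)
  moreover have "monomial_ideal 0 {}" "almost_revlex 0 {}"
    unfolding monomial_ideal_def almost_revlex_def min_gens_def by simp_all
  ultimately show ?case by blast
next
  case (Suc k)
  then have h: "h 0 = 1" "\<forall>d. h d \<in> \<nat>" "unimodal h" "admissible k (froberg_step 1 h)"
    by auto
  obtain K0 where "monomial_ideal k K0" "almost_revlex k K0"
    "\<forall>d. of_nat (hilb_quot k K0 d) = froberg_step 1 h d"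
    using Suc.IH[OF h(4)] by blast
  then interpret froberg_extension h k K0 using h by unfold_locales auto
  show ?case by (rule exists_almost_revlex_ideal)
qed

theorem proposition4p6:
  fixes n :: nat and ds :: "nat list"
  assumes "\<forall>d\<in>set ds. d > 0"
  shows "\<exists>K. monomial_ideal (if n \<ge> 1 then n else 1) K
           \<and> almost_revlex (if n \<ge> 1 then n else 1) K
           \<and> (\<forall>d. of_nat (hilb_quot (if n \<ge> 1 then n else 1) K d) = froberg n ds d)"
proof -
  have "admissible (if n \<ge> 1 then n else 1) (froberg n ds)"
  proof (cases "n \<ge> 1")
    case False
    then have "n = 0" by simp
    then show ?thesis using admissible_one_if_zero admissible_froberg[OF assms, of 0] by simp
  qed (use admissible_froberg[OF assms] in simp)
  then show ?thesis by (rule admissible_realisable)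
qed

end
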